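(* Let $S\subset S^4$ be a round two-sphere and let $\varphi:\mathbb{Z}^2\to S$ be a discrete complex cross-ratio net. Then there exists a principal contact element net in $S^4$ congruent to $\varphi$.
   Context: $\mathbb{H}$ denotes the quaternions, $\mathbb{C}=\mathrm{span}_{\mathbb{R}}\{1,i\}\subset\mathbb{H}$; $\mathbb{H}^2$ (right $\mathbb{H}$-vector space) $\cong\mathbb{C}^4$, right multiplication by $j$ being $\mathbb{C}$-antilinear. $S^4\cong\mathbb{HP}^1=\{v\mathbb{H}\}$, $\mathbb{CP}^3=\mathbb{P}(\mathbb{C}^4)$; the twistor fibre over $v\mathbb{H}$ is the projective line through $[v],[vj]$. $Q^4=\{[\alpha]\in\mathbb{P}(\Lambda^2\mathbb{C}^4):\alpha\wedge\alpha=0\}$; $[v\wedge w]$ is identified with the line of $\mathbb{CP}^3$ through $[v],[w]$. The antilinear extension of $v\wedge w\mapsto vj\wedge wj$ gives a real structure $j$ on $Q^4$ whose fixed ("real") points are the twistor fibres, identified with points of $S^4$. A round two-sphere with a conformal structure is $\{l:Sl=l\}$ for some $S\in\mathrm{End}_{\mathbb{H}}(\mathbb{H}^2)$, $S^2=-1$; this identifies the sphere conformally with $\mathbb{CP}^1$ (its twistor lift $\mathbb{P}\{v:Sv=vi\}$). A discrete complex cross-ratio net in $S\cong\mathbb{CP}^1$ is a map $\varphi:\mathbb{Z}^2\to S$ such that for every elementary face $[\varphi(m+1,n),\varphi(m,n),\varphi(m,n+1),\varphi(m+1,n+1)]=\lambda$ for a given $\lambda\in\mathbb{C}$, where $[z_1,z_2,z_3,z_4]=\frac{(z_1-z_2)(z_3-z_4)}{(z_2-z_3)(z_4-z_1)}$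 (the cross-ratio need not be real, so faces need not be circular). A null line is a projective line contained in $Q^4$; a contact element is a null line containing a real point. A principal contact element net is a map $\Phi$ from $\mathbb{Z}^2$ to null lines of $Q^4$ such that each $\Phi(m,n)$ is a contact element, their real points are distinct, and $\Phi(m,n)\cap\Phi(m+1,n)\neq\emptyset$, $\Phi(m,n)\cap\Phi(m,n+1)\neq\emptyset$. It is congruent to $\varphi$ if the real point $\varphi(k)$ lies on $\Phi(k)$ for each $k$. *)

theory Defs
  imports "HOL-Analysis.Analysis"
begin

text \<open>The right quaternionic vector space H^2 is identified with C^4
(type complex^4) by writing a quaternion as q = a + j b with a, b complex;
the complex structure is right multiplication by i, and right multiplication
by j becomes the antilinear map (a1,b1,a2,b2) |-> (-cnj b1, cnj a1, -cnj b2, cnj a2).\<close>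

type_synonym c4 = "complex^4"
text \<open>Bivectors (elements of Lambda^2 C^4) are modelled as antisymmetric 4x4
complex matrices; v wedge w is the matrix v w^T - w v^T.\<close>
type_synonym biv = "complex^4^4"

definition vcnj :: "c4 \<Rightarrow> c4" where
  "vcnj v = (\<chi> i. cnj (v $ i))"

definition mcnj :: "complex^4^4 \<Rightarrow> complex^4^4" where
  "mcnj A = (\<chi> i k. cnj (A $ i $ k))"

definition Jmat :: "complex^4^4" where
  "Jmat = vector [vector [0, -1, 0, 0], vector [1, 0, 0, 0],
                  vector [0, 0, 0, -1], vector [0, 0, 1, 0]]"

definition Jv :: "c4 \<Rightarrow> c4" where
  "Jv v = Jmat *v vcnj v"

definition bscale :: "complex \<Rightarrow> biv \<Rightarrow> biv" where
  "bscale c A = (\<chi> i k. c * A $ i $ k)"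

definition wedge :: "c4 \<Rightarrow> c4 \<Rightarrow> biv" where
  "wedge v w = (\<chi> i k. v $ i * w $ k - w $ i * v $ k)"

definition antisym_biv :: "biv \<Rightarrow> bool" where
  "antisym_biv A \<longleftrightarrow> transpose A = - A"

text \<open>alpha wedge alpha = 0 in Lambda^4 C^4, i.e. the Pluecker relation (Pfaffian).\<close>
definition pf :: "biv \<Rightarrow> complex" where
  "pf A = A$1$2 * A$3$4 - A$1$3 * A$2$4 + A$1$4 * A$2$3"

text \<open>Points of the Klein quadric Q^4 (represented by nonzero bivectors).\<close>
definition in_Q :: "biv \<Rightarrow> bool" where
  "in_Q A \<longleftrightarrow> antisym_biv A \<and> A \<noteq> 0 \<and> pf A = 0"

text \<open>The real structure j on Lambda^2 C^4: antilinear extension of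
v wedge w |-> vj wedge wj.\<close>
definition jb :: "biv \<Rightarrow> biv" where
  "jb A = Jmat ** mcnj A ** transpose Jmat"

definition real_pt :: "biv \<Rightarrow> bool" where
  "real_pt A \<longleftrightarrow> in_Q A \<and> (\<exists>c. jb A = bscale c A)"

definition proj_eq :: "biv \<Rightarrow> biv \<Rightarrow> bool" where
  "proj_eq A B \<longleftrightarrow> (\<exists>c. B = bscale c A)"

text \<open>A projective line of P(Lambda^2 C^4) is represented by a pair of
C-linearly independent bivectors spanning it.\<close>
definition lspan :: "biv \<times> biv \<Rightarrow> biv set" where
  "lspan L = {bscale a (fst L) + bscale b (snd L) | a b. True}"

definition proj_line :: "biv \<times> biv \<Rightarrow> bool" where
  "proj_line L \<longleftrightarrow> antisym_biv (fst L) \<and> antisym_biv (snd L) \<and>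
     (\<forall>a b. bscale a (fst L) + bscale b (snd L) = 0 \<longrightarrow> a = 0 \<and> b = 0)"

definition null_line :: "biv \<times> biv \<Rightarrow> bool" where
  "null_line L \<longleftrightarrow> proj_line L \<and> (\<forall>A \<in> lspan L. pf A = 0)"

definition contact_element :: "biv \<times> biv \<Rightarrow> bool" where
  "contact_element L \<longleftrightarrow> null_line L \<and> (\<exists>A \<in> lspan L. real_pt A)"

definition lines_meet :: "biv \<times> biv \<Rightarrow> biv \<times> biv \<Rightarrow> bool" where
  "lines_meet L M \<longleftrightarrow> (\<exists>A. A \<noteq> 0 \<and> A \<in> lspan L \<and> A \<in> lspan M)"

definition distinct_real_pts :: "biv \<times> biv \<Rightarrow> biv \<times> biv \<Rightarrow> bool" where
  "distinct_real_pts L M \<longleftrightarrow>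
     (\<forall>A B. A \<in> lspan L \<longrightarrow> real_pt A \<longrightarrow> B \<in> lspan M \<longrightarrow> real_pt B \<longrightarrow> \<not> proj_eq A B)"

definition principal_contact_element_net :: "(int \<times> int \<Rightarrow> biv \<times> biv) \<Rightarrow> bool" where
  "principal_contact_element_net \<Phi> \<longleftrightarrow>
     (\<forall>k. contact_element (\<Phi> k)) \<and>
     (\<forall>m n. distinct_real_pts (\<Phi> (m, n)) (\<Phi> (m + 1, n)) \<and>
            distinct_real_pts (\<Phi> (m, n)) (\<Phi> (m, n + 1)) \<and>
            lines_meet (\<Phi> (m, n)) (\<Phi> (m + 1, n)) \<and>
            lines_meet (\<Phi> (m, n)) (\<Phi> (m, n + 1)))"

text \<open>A round two-sphere with conformal structure: S in End_H(H^2), i.e. a complex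
4x4 matrix commuting with right multiplication by j, with S^2 = -1.\<close>
definition sphere_endo :: "complex^4^4 \<Rightarrow> bool" where
  "sphere_endo S \<longleftrightarrow> (\<forall>v. S *v Jv v = Jv (S *v v)) \<and> S ** S = - mat 1"

text \<open>Twistor lift of the sphere: W = {v. S v = v i}; the sphere is identified with
P(W) = CP^1, a point [v] of P(W) corresponding to the point v H of S^4.\<close>
definition in_lift :: "complex^4^4 \<Rightarrow> c4 \<Rightarrow> bool" where
  "in_lift S v \<longleftrightarrow> v \<noteq> 0 \<and> S *v v = \<i> *s v"

text \<open>Cross-ratio on P(W): for z_a in W, the bivectors z_a wedge z_b lie in the
complex line Lambda^2 W, z_a wedge z_b = d_ab omega, and d_ab is the determinant of
(z_a,z_b) in a basis of W (up to a common factor). The condition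
[z1,z2,z3,z4] = lambda, i.e. d12 d34 / (d23 d41) = lambda with d23 d41 nonzero,
is expressed coordinate-freely via tensor products of these bivectors.\<close>
definition cross_ratio_eq :: "c4 \<Rightarrow> c4 \<Rightarrow> c4 \<Rightarrow> c4 \<Rightarrow> complex \<Rightarrow> bool" where
  "cross_ratio_eq z1 z2 z3 z4 lam \<longleftrightarrow>
     wedge z2 z3 \<noteq> 0 \<and> wedge z4 z1 \<noteq> 0 \<and>
     (\<forall>p q r s. (wedge z1 z2) $ p $ q * (wedge z3 z4) $ r $ s =
                lam * ((wedge z2 z3) $ p $ q * (wedge z4 z1) $ r $ s))"

definition cross_ratio_net :: "complex^4^4 \<Rightarrow> complex \<Rightarrow> (int \<times> int \<Rightarrow> c4) \<Rightarrow> bool" where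
  "cross_ratio_net S lam \<phi> \<longleftrightarrow>
     (\<forall>k. in_lift S (\<phi> k)) \<and>
     (\<forall>m n. cross_ratio_eq (\<phi> (m + 1, n)) (\<phi> (m, n)) (\<phi> (m, n + 1)) (\<phi> (m + 1, n + 1)) lam)"

text \<open>The real point of Q^4 corresponding to the point vH of S^4 is the twistor
fibre through [v],[vj], i.e. [v wedge vj].\<close>
definition congruent_net :: "(int \<times> int \<Rightarrow> biv \<times> biv) \<Rightarrow> (int \<times> int \<Rightarrow> c4) \<Rightarrow> bool" where
  "congruent_net \<Phi> \<phi> \<longleftrightarrow> (\<forall>k. wedge (\<phi> k) (Jv (\<phi> k)) \<in> lspan (\<Phi> k))"

end

theory Submission
  imports Defs
begin

(* Let W be the i-eigenspace of S, the twistor lift of the sphere. Since S commutes with j,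
   Wj is the (-i)-eigenspace, so W and Wj meet only in 0 and dim W <= 2; hence all bivectors
   x wedge y with x, y in W are proportional to one point [omega] of Q^4. Take Phi(k) to be the
   null line through the real point phi(k) wedge phi(k)j and [omega]: every two of these lines
   meet in [omega]. Applying S + i and S - i to the two tensor factors separates the W- and
   Wj-components of a bivector; this shows that phi(k) wedge phi(k)j is the only real point on
   Phi(k) and that it determines [phi(k)]. Neighbouring points of the net are distinct because
   the cross-ratio is defined and lambda is nonzero. *)

lemma vec4_eq_iff: "(x::'a^4) = y \<longleftrightarrow> x$1 = y$1 \<and> x$2 = y$2 \<and> x$3 = y$3 \<and> x$4 = y$4"
  by (simp add: vec_eq_iff forall_4)

lemma biv_eq_iff: "(A::biv) = B \<longleftrightarrow> (\<forall>i k. A$i$k = B$i$k)"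
  by (simp add: vec_eq_iff)

lemma matrix_vector_mult_4:
  "(M::complex^4^4) *v x = (\<chi> i. M$i$1 * x$1 + M$i$2 * x$2 + M$i$3 * x$3 + M$i$4 * x$4)"
  by (simp add: matrix_vector_mult_def sum_4)

lemma add_mat_mult_vector: "(M + mat c) *v x = M *v x + c *s (x::complex^4)"
  by (simp add: vec_eq_iff matrix_vector_mult_def mat_def sum_4 algebra_simps forall_4 if_distrib)

lemma diff_mat_mult_vector: "(M - mat c) *v x = M *v x - c *s (x::complex^4)"
  by (simp add: vec_eq_iff matrix_vector_mult_def mat_def sum_4 algebra_simps forall_4 if_distrib)

lemma Jv_nth:
  "Jv v $ 1 = - cnj (v$2)" "Jv v $ 2 = cnj (v$1)" "Jv v $ 3 = - cnj (v$4)" "Jv v $ 4 = cnj (v$3)"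
  by (simp_all add: Jv_def Jmat_def vcnj_def matrix_vector_mult_4 vector_def)

lemma Jv_add_scale: "Jv (a *s x + b *s y) = cnj a *s Jv x + cnj b *s Jv y"
  by (simp add: vec4_eq_iff Jv_nth algebra_simps)

lemma Jv_scale: "Jv (a *s x) = cnj a *s Jv x"
  by (simp add: vec4_eq_iff Jv_nth)

lemma Jv_Jv: "Jv (Jv x) = - x"
  by (simp add: vec4_eq_iff Jv_nth)

lemma Jv_eq_0_iff: "Jv x = 0 \<longleftrightarrow> x = 0"
  by (auto simp add: vec4_eq_iff Jv_nth)

lemma wedge_nth [simp]: "wedge x y $ i $ k = x$i * y$k - y$i * x$k"
  by (simp add: wedge_def)

lemma bscale_nth [simp]: "bscale c A $ i $ k = c * A$i$k"
  by (simp add: bscale_def)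

lemma bscale_eq_0_iff: "bscale c A = 0 \<longleftrightarrow> c = 0 \<or> A = 0"
  by (auto simp: biv_eq_iff)

lemma bscale_0_left [simp]: "bscale 0 A = 0"
  by (simp add: biv_eq_iff)

lemma wedge_add_scale_right:
  "wedge x (a *s y + b *s z) = bscale a (wedge x y) + bscale b (wedge x z)"
  by (simp add: biv_eq_iff algebra_simps)

lemma wedge_commute: "wedge y x = - wedge x y"
  by (simp add: biv_eq_iff)

lemma wedge_scale_self: "wedge x (c *s x) = 0"
  by (simp add: biv_eq_iff)

lemma wedge_neg: "wedge (- x) (- y) = wedge x y"
  by (simp add: biv_eq_iff)

lemma wedge_left_nonzero: "wedge x y \<noteq> 0 \<Longrightarrow> x \<noteq> 0"
  by (auto simp: biv_eq_iff)

lemma pf_wedge: "pf (wedge x y) = 0"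
  by (simp add: pf_def algebra_simps)

lemma antisym_biv_wedge: "antisym_biv (wedge x y)"
  by (simp add: antisym_biv_def biv_eq_iff transpose_def)

lemma jb_wedge: "jb (wedge x y) = wedge (Jv x) (Jv y)"
proof -
  have "jb A $ i $ k = (\<Sum>j\<in>UNIV. \<Sum>l\<in>UNIV. Jmat$i$j * cnj (A$j$l) * Jmat$k$l)" for A i k
    by (simp add: jb_def matrix_matrix_mult_def transpose_def mcnj_def sum_distrib_left
        sum_distrib_right mult.assoc) (rule sum.swap)
  then show ?thesis
    by (simp add: biv_eq_iff forall_4 sum_4 Jmat_def vector_def Jv_nth algebra_simps)
qed

lemma jb_zero: "jb 0 = 0"
proof -
  have "mcnj 0 = 0"
    by (simp add: mcnj_def vec_eq_iff)
  then show ?thesis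
    by (simp add: jb_def)
qed

lemma jb_jb_wedge: "jb (jb (wedge x y)) = wedge x y"
  by (simp add: jb_wedge Jv_Jv wedge_neg)

lemma wedge_nonzero_imp_independent:
  assumes "wedge u v \<noteq> 0" and "a *s u + b *s v = 0"
  shows "a = 0" and "b = 0"
proof -
  have "bscale a (wedge u v) = - wedge v (a *s u + b *s v)"
    and "bscale b (wedge u v) = wedge u (a *s u + b *s v)"
    by (simp_all add: biv_eq_iff algebra_simps)
  with assms show "a = 0" and "b = 0"
    by (auto simp: bscale_eq_0_iff biv_eq_iff)
qed

definition biv_map :: "complex^4^4 \<Rightarrow> complex^4^4 \<Rightarrow> biv \<Rightarrow> biv" where
  "biv_map P Q X = (\<chi> i k. \<Sum>j\<in>UNIV. \<Sum>l\<in>UNIV. P$i$j * X$j$l * Q$k$l)"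

definition outer :: "c4 \<Rightarrow> c4 \<Rightarrow> biv" where
  "outer p q = (\<chi> i k. p$i * q$k)"

lemma biv_map_wedge:
  "biv_map P Q (wedge x y) = outer (P *v x) (Q *v y) - outer (P *v y) (Q *v x)"
  by (simp add: biv_eq_iff biv_map_def outer_def matrix_vector_mult_def sum_4 algebra_simps)

lemma biv_map_same_wedge: "biv_map P P (wedge x y) = wedge (P *v x) (P *v y)"
  by (simp add: biv_map_wedge biv_eq_iff outer_def)

lemma biv_map_bscale: "biv_map P Q (bscale c X) = bscale c (biv_map P Q X)"
  by (simp add: biv_eq_iff biv_map_def sum_distrib_left algebra_simps)

lemma biv_map_zero: "biv_map P Q 0 = 0"
  by (simp add: biv_eq_iff biv_map_def)

lemma outer_nth [simp]: "outer p q $ i $ k = p$i * q$k"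
  by (simp add: outer_def)

lemma outer_eq_0_iff: "outer p q = 0 \<longleftrightarrow> p = 0 \<or> q = 0"
  by (auto simp: biv_eq_iff vec_eq_iff)

lemma outer_proportional_imp_wedge_eq_0:
  assumes "bscale a (outer y q) = bscale c (outer x p)" and "a \<noteq> 0" and "q \<noteq> 0"
  shows "wedge x y = 0"
proof -
  obtain k where "q$k \<noteq> 0"
    using \<open>q \<noteq> 0\<close> by (auto simp: vec_eq_iff)
  have "a * q$k * y$i = c * p$k * x$i" for i
    using assms(1) by (auto simp: biv_eq_iff algebra_simps)
  then have "y = (c * p$k / (a * q$k)) *s x"
    using \<open>a \<noteq> 0\<close> \<open>q$k \<noteq> 0\<close> by (simp add: vec_eq_iff field_simps)
  then show ?thesis
    by (simp add: wedge_scale_self)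
qed

lemma conj_eigencomponent_zero:
  fixes S :: "complex^4^4"
  assumes "S *v x = \<i> *s x" and "S *v y = - \<i> *s y" and "S *v (x + y) = \<i> *s (x + y)"
  shows "y = 0"
proof -
  have "\<i> *s x + \<i> *s y = \<i> *s x - \<i> *s y"
    using assms by (simp add: matrix_vector_right_distrib algebra_simps)
  then show ?thesis
    by (simp add: vec_eq_iff)
qed

text \<open>For x, y in the twistor lift of the sphere, wedge x y represents the twistor line P(W),
  so contact_line x y is the contact element tangent to the sphere at the point x.\<close>
definition contact_line :: "c4 \<Rightarrow> c4 \<Rightarrow> biv \<times> biv" where
  "contact_line x y = (wedge x (Jv x), wedge x y)"

lemma lspan_contact_line:
  "A \<in> lspan (contact_line x y) \<longleftrightarrow> (\<exists>a b. A = wedge x (a *s Jv x + b *s y))"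
  by (auto simp: lspan_def contact_line_def wedge_add_scale_right)

lemma wedge_Jv_in_contact_line: "wedge x (Jv x) \<in> lspan (contact_line x y)"
proof -
  have "wedge x (Jv x) = wedge x (1 *s Jv x + 0 *s y)"
    by simp
  then show ?thesis
    unfolding lspan_contact_line by blast
qed

locale quaternionic_endo =
  fixes S :: "complex^4^4"
  assumes S_Jv: "S *v Jv v = Jv (S *v v)"
begin

definition W :: "c4 set" where
  "W = {v. S *v v = \<i> *s v}"

lemma W_add_scale: "x \<in> W \<Longrightarrow> y \<in> W \<Longrightarrow> a *s x + b *s y \<in> W"
  by (simp add: W_def matrix_vector_right_distrib vector_scalar_commute algebra_simps)

lemma Jv_conj_eigen: "x \<in> W \<Longrightarrow> S *v Jv x = - \<i> *s Jv x"
  by (simp add: W_def S_Jv Jv_scale)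

lemma W_spanned_by_independent_pair:
  assumes u: "u \<in> W" and v: "v \<in> W" and w: "w \<in> W" and uv: "wedge u v \<noteq> 0"
  shows "\<exists>a b. w = a *s u + b *s v"
proof -
  \<comment> \<open>\<open>u, v, u j, v j\<close> is a basis, and the \<open>u j, v j\<close> part of \<open>w\<close> vanishes by the eigenvalue split.\<close>
  define M :: "complex^4^4" where
    "M = (\<chi> i j. if j = 1 then u$i else if j = 2 then v$i else if j = 3 then Jv u $ i else Jv v $ i)"
  have M_mult: "M *v c = (c$1 *s u + c$2 *s v) + (c$3 *s Jv u + c$4 *s Jv v)" for c
    by (simp add: vec_eq_iff matrix_vector_mult_4 M_def algebra_simps)
  have split: "c$3 *s Jv u + c$4 *s Jv v = 0" if "M *v c \<in> W" for c
  proof (rule conj_eigencomponent_zero)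
    show "S *v (c$1 *s u + c$2 *s v) = \<i> *s (c$1 *s u + c$2 *s v)"
      using W_add_scale[OF u v] by (simp add: W_def)
    show "S *v (c$3 *s Jv u + c$4 *s Jv v) = - \<i> *s (c$3 *s Jv u + c$4 *s Jv v)"
      using Jv_conj_eigen[OF u] Jv_conj_eigen[OF v]
      by (simp add: matrix_vector_right_distrib vector_scalar_commute algebra_simps)
    show "S *v (c$1 *s u + c$2 *s v + (c$3 *s Jv u + c$4 *s Jv v)) =
        \<i> *s (c$1 *s u + c$2 *s v + (c$3 *s Jv u + c$4 *s Jv v))"
      using that by (simp add: W_def M_mult)
  qed
  have "c = 0" if "M *v c = 0" for c
  proof -
    have J0: "c$3 *s Jv u + c$4 *s Jv v = 0"
      by (rule split) (simp add: that W_def)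
    then have "c$1 *s u + c$2 *s v = 0"
      using that by (simp add: M_mult)
    note W_part = wedge_nonzero_imp_independent[OF uv this]
    have "cnj (c$3) *s u + cnj (c$4) *s v = 0"
      using J0 Jv_add_scale[of "cnj (c$3)" u "cnj (c$4)" v] by (simp add: Jv_eq_0_iff)
    note J_part = wedge_nonzero_imp_independent[OF uv this]
    show "c = 0"
      using W_part J_part by (simp add: vec4_eq_iff)
  qed
  then obtain B where "B ** M = mat 1"
    using matrix_left_invertible_ker by blast
  then have "M ** B = mat 1"
    using matrix_left_right_inverse by blast
  define c where "c = B *v w"
  then have w_eq: "w = M *v c"
    using \<open>M ** B = mat 1\<close> by (simp add: matrix_vector_mul_assoc)
  with w have "c$3 *s Jv u + c$4 *s Jv v = 0"
    by (intro split) simp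
  with w_eq show ?thesis
    by (auto simp: M_mult)
qed

lemma wedge_W_proportional:
  assumes "x \<in> W" "y \<in> W" "z \<in> W" "w \<in> W" and "wedge x y \<noteq> 0"
  shows "\<exists>t. wedge z w = bscale t (wedge x y)"
proof -
  obtain a b c d where "z = a *s x + b *s y" and "w = c *s x + d *s y"
    using W_spanned_by_independent_pair[OF assms(1,2) _ assms(5)] assms(3,4) by blast
  then have "wedge z w = bscale (a * d - b * c) (wedge x y)"
    by (simp add: biv_eq_iff algebra_simps)
  then show ?thesis ..
qed

definition Splus :: "complex^4^4" where "Splus = S + mat \<i>"
definition Sminus :: "complex^4^4" where "Sminus = S - mat \<i>"

lemma Splus_Sminus_W:
  assumes "x \<in> W"
  shows "Splus *v x = (2 * \<i>) *s x" and "Splus *v Jv x = 0" and "Sminus *v Jv x = (- 2 * \<i>) *s Jv x"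
  using assms Jv_conj_eigen[OF assms]
  by (simp_all add: W_def Splus_def Sminus_def add_mat_mult_vector diff_mat_mult_vector vec_eq_iff)

lemma biv_map_Splus_wedge:
  assumes "x \<in> W" "y \<in> W"
  shows "biv_map Splus Splus (wedge x (a *s Jv x + b *s y)) = bscale (- 4 * b) (wedge x y)"
  using assms by (simp add: biv_map_same_wedge matrix_vector_right_distrib vector_scalar_commute Splus_Sminus_W
      biv_eq_iff algebra_simps)

lemma biv_map_Splus_Sminus_wedge_Jv:
  assumes "x \<in> W"
  shows "biv_map Splus Sminus (wedge x (Jv x)) = bscale 4 (outer x (Jv x))"
  using assms by (simp add: biv_map_wedge Splus_Sminus_W biv_eq_iff algebra_simps)

lemma wedge_Jv_nonzero:
  assumes "x \<in> W" and "x \<noteq> 0"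
  shows "wedge x (Jv x) \<noteq> 0"
proof
  assume "wedge x (Jv x) = 0"
  then have "bscale 4 (outer x (Jv x)) = 0"
    using biv_map_Splus_Sminus_wedge_Jv[OF \<open>x \<in> W\<close>] by (simp add: biv_map_zero)
  with \<open>x \<noteq> 0\<close> show False
    by (simp add: bscale_eq_0_iff outer_eq_0_iff Jv_eq_0_iff)
qed

lemma wedge_Jv_proportional_imp_wedge_eq_0:
  assumes "x \<in> W" "y \<in> W" and "y \<noteq> 0" and "a \<noteq> 0"
    and "bscale a (wedge y (Jv y)) = bscale c (wedge x (Jv x))"
  shows "wedge x y = 0"
proof (rule outer_proportional_imp_wedge_eq_0)
  have "biv_map Splus Sminus (bscale a (wedge y (Jv y))) = biv_map Splus Sminus (bscale c (wedge x (Jv x)))"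
    using assms(5) by simp
  then show "bscale (4 * a) (outer y (Jv y)) = bscale (4 * c) (outer x (Jv x))"
    using assms(1,2) by (simp add: biv_map_bscale biv_map_Splus_Sminus_wedge_Jv biv_eq_iff)
  show "4 * a \<noteq> 0" "Jv y \<noteq> 0"
    using assms(3,4) by (simp_all add: Jv_eq_0_iff)
qed

lemma real_pt_wedge_Jv:
  assumes "x \<in> W" and "x \<noteq> 0"
  shows "real_pt (wedge x (Jv x))"
proof -
  have "jb (wedge x (Jv x)) = bscale 1 (wedge x (Jv x))"
    by (simp add: jb_wedge Jv_Jv biv_eq_iff)
  then show ?thesis
    using wedge_Jv_nonzero[OF assms]
    unfolding real_pt_def in_Q_def by (blast intro: antisym_biv_wedge pf_wedge)
qed

lemma contact_element_contact_line:
  assumes x: "x \<in> W" and y: "y \<in> W" and xy: "wedge x y \<noteq> 0"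
  shows "contact_element (contact_line x y)"
proof -
  have "a = 0 \<and> b = 0" if "bscale a (wedge x (Jv x)) + bscale b (wedge x y) = 0" for a b
  proof -
    have "wedge x (a *s Jv x + b *s y) = 0"
      using that by (simp add: wedge_add_scale_right)
    then have "bscale (- 4 * b) (wedge x y) = 0"
      using biv_map_Splus_wedge[OF x y, of a b] by (simp add: biv_map_zero)
    with xy have "b = 0"
      by (simp add: bscale_eq_0_iff)
    with that have "bscale a (wedge x (Jv x)) = 0"
      by (simp add: bscale_eq_0_iff)
    with \<open>b = 0\<close> show ?thesis
      using wedge_Jv_nonzero[OF x wedge_left_nonzero[OF xy]] by (simp add: bscale_eq_0_iff)
  qed
  then have "null_line (contact_line x y)"
    by (auto simp: null_line_def proj_line_def contact_line_def antisym_biv_wedge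
        lspan_contact_line[unfolded contact_line_def] pf_wedge)
  moreover note wedge_Jv_in_contact_line
  ultimately show ?thesis
    using real_pt_wedge_Jv[OF x wedge_left_nonzero[OF xy]] by (auto simp: contact_element_def)
qed

lemma real_pt_on_contact_line:
  assumes x: "x \<in> W" and y: "y \<in> W" and xy: "wedge x y \<noteq> 0"
    and A: "A \<in> lspan (contact_line x y)" and real: "real_pt A"
  shows "\<exists>a. a \<noteq> 0 \<and> A = bscale a (wedge x (Jv x))"
proof -
  obtain a b where A_eq: "A = wedge x (a *s Jv x + b *s y)"
    using A by (auto simp: lspan_contact_line)
  obtain c where c: "jb A = bscale c A"
    using real by (auto simp: real_pt_def)
  have "A \<noteq> 0"
    using real by (simp add: real_pt_def in_Q_def)
  moreover have "jb (jb A) = A"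
    by (simp add: A_eq jb_jb_wedge)
  ultimately have "c \<noteq> 0"
    using c by (auto simp: jb_zero)
  have "bscale (c * (- 4 * b)) (wedge x y) = biv_map Splus Splus (bscale c A)"
    by (simp add: A_eq biv_map_bscale biv_map_Splus_wedge[OF x y] biv_eq_iff)
  also have "\<dots> = biv_map Splus Splus (jb A)"
    by (simp add: c)
  also have "\<dots> = 0"
    by (simp add: A_eq jb_wedge biv_map_same_wedge Splus_Sminus_W[OF x] biv_eq_iff)
  finally have "bscale (c * (- 4 * b)) (wedge x y) = 0" .
  with xy \<open>c \<noteq> 0\<close> have "b = 0"
    by (simp add: bscale_eq_0_iff)
  then have "A = bscale a (wedge x (Jv x))"
    by (simp add: A_eq biv_eq_iff algebra_simps)
  with \<open>A \<noteq> 0\<close> show ?thesis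
    by (auto simp: bscale_eq_0_iff)
qed

lemma distinct_real_pts_contact_lines:
  assumes x: "x \<in> W" "x' \<in> W" and y: "y \<in> W" "y' \<in> W"
    and nonzero: "wedge x x' \<noteq> 0" "wedge y y' \<noteq> 0" "wedge x y \<noteq> 0"
  shows "distinct_real_pts (contact_line x x') (contact_line y y')"
  unfolding distinct_real_pts_def
proof (intro allI impI notI)
  fix A B
  assume "A \<in> lspan (contact_line x x')" "real_pt A"
    and "B \<in> lspan (contact_line y y')" "real_pt B" and "proj_eq A B"
  then obtain a b c where "b \<noteq> 0" and "bscale b (wedge y (Jv y)) = bscale c (bscale a (wedge x (Jv x)))"
    using real_pt_on_contact_line[OF x nonzero(1)] real_pt_on_contact_line[OF y nonzero(2)]
    by (metis proj_eq_def)
  then have "bscale b (wedge y (Jv y)) = bscale (c * a) (wedge x (Jv x))"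
    by (simp add: biv_eq_iff)
  then show False
    using wedge_Jv_proportional_imp_wedge_eq_0[OF x(1) y(1) wedge_left_nonzero[OF nonzero(2)] \<open>b \<noteq> 0\<close>]
      nonzero(3) by blast
qed

lemma lines_meet_contact_lines:
  assumes "x \<in> W" "x' \<in> W" "y \<in> W" "y' \<in> W"
    and "wedge x x' \<noteq> 0" "wedge y y' \<noteq> 0"
  shows "lines_meet (contact_line x x') (contact_line y y')"
proof -
  obtain t where "wedge y y' = bscale t (wedge x x')"
    using wedge_W_proportional assms by blast
  then have "wedge y y' = wedge x (0 *s Jv x + t *s x')"
    by (simp add: biv_eq_iff algebra_simps)
  moreover have "wedge y y' = wedge y (0 *s Jv y + 1 *s y')"
    by simp
  ultimately have "wedge y y' \<in> lspan (contact_line x x')" "wedge y y' \<in> lspan (contact_line y y')"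
    unfolding lspan_contact_line by blast+
  with \<open>wedge y y' \<noteq> 0\<close> show ?thesis
    by (auto simp: lines_meet_def)
qed

end

lemma cross_ratio_eq_wedge_nonzero:
  assumes "cross_ratio_eq z1 z2 z3 z4 lam" and "lam \<noteq> 0"
  shows "wedge z1 z2 \<noteq> 0" and "wedge z2 z3 \<noteq> 0"
proof -
  from assms(1) have "wedge z2 z3 \<noteq> 0" and "wedge z4 z1 \<noteq> 0"
    and cr: "\<And>p q r s. (wedge z1 z2) $ p $ q * (wedge z3 z4) $ r $ s =
                lam * ((wedge z2 z3) $ p $ q * (wedge z4 z1) $ r $ s)"
    by (auto simp: cross_ratio_eq_def)
  then obtain p q r s where "(wedge z2 z3)$p$q \<noteq> 0" and "(wedge z4 z1)$r$s \<noteq> 0"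
    by (auto simp: biv_eq_iff)
  then have "(wedge z1 z2) $ p $ q \<noteq> 0"
    using cr[of p q r s] assms(2) by auto
  then show "wedge z1 z2 \<noteq> 0"
    by (auto simp: biv_eq_iff)
  show "wedge z2 z3 \<noteq> 0" by fact
qed

theorem mainTheorem3:
  fixes S :: "complex^4^4" and lam :: complex and \<phi> :: "int \<times> int \<Rightarrow> complex^4"
  assumes "sphere_endo S"
    and "lam \<noteq> 0"
    and "cross_ratio_net S lam \<phi>"
  shows "\<exists>\<Phi>. principal_contact_element_net \<Phi> \<and> congruent_net \<Phi> \<phi>"
proof -
  interpret quaternionic_endo S
    using assms(1) by unfold_locales (simp add: sphere_endo_def)
  have W: "\<phi> k \<in> W" for k
    using assms(3) unfolding cross_ratio_net_def in_lift_def W_def by blast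
  have cr: "cross_ratio_eq (\<phi> (m + 1, n)) (\<phi> (m, n)) (\<phi> (m, n + 1)) (\<phi> (m + 1, n + 1)) lam" for m n
    using assms(3) by (simp add: cross_ratio_net_def)
  have vertical: "wedge (\<phi> (m, n)) (\<phi> (m, n + 1)) \<noteq> 0" for m n
    using cross_ratio_eq_wedge_nonzero(2)[OF cr assms(2)] .
  have horizontal: "wedge (\<phi> (m, n)) (\<phi> (m + 1, n)) \<noteq> 0" for m n
    using cross_ratio_eq_wedge_nonzero(1)[OF cr assms(2)] wedge_commute by (metis neg_equal_0_iff_equal)
  define \<Phi> where "\<Phi> k = contact_line (\<phi> k) (\<phi> (fst k, snd k + 1))" for k
  have "contact_element (\<Phi> k)" for k
    using vertical[of "fst k" "snd k"] by (simp add: \<Phi>_def contact_element_contact_line W)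
  then have "principal_contact_element_net \<Phi>"
    unfolding principal_contact_element_net_def \<Phi>_def fst_conv snd_conv
    by (intro allI conjI distinct_real_pts_contact_lines
        lines_meet_contact_lines W vertical horizontal)
  moreover have "congruent_net \<Phi> \<phi>"
    by (simp add: congruent_net_def \<Phi>_def wedge_Jv_in_contact_line)
  ultimately show ?thesis
    by blast
qed

end
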